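(* For integers $n\ge m\ge 2$, $$f(S_m,\overline{K_n})\ge n+\min_{d}\max\left\{d-1+\left\lceil\frac{n}{d}\right\rceil,\ 2m-2-d\right\},$$ where the minimum is over positive integers $d$.
   Context: All graphs are finite and simple. $S_m=K_{1,m-1}$ is the star with $m$ vertices; $\overline{K_n}$ is the edgeless graph on $n$ vertices. A graph $G$ is $(H_1,H_2)$-full if every vertex of $G$ belongs to an induced subgraph isomorphic to $H_1$ and to an induced subgraph isomorphic to $H_2$; $f(H_1,H_2)$ is the minimum order of an $(H_1,H_2)$-full graph. *)

theory Defs
  imports Complex_Main
begin

definition simple_graph :: "'a set \<Rightarrow> ('a \<Rightarrow> 'a \<Rightarrow> bool) \<Rightarrow> bool" where
  "simple_graph V E \<longleftrightarrow> finite V \<and> V \<noteq> {} \<and>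
     (\<forall>x y. E x y \<longrightarrow> x \<in> V \<and> y \<in> V) \<and>
     (\<forall>x y. E x y \<longrightarrow> E y x) \<and> (\<forall>x. \<not> E x x)"

definition in_induced_copy ::
  "'a set \<Rightarrow> ('a \<Rightarrow> 'a \<Rightarrow> bool) \<Rightarrow> 'b set \<Rightarrow> ('b \<Rightarrow> 'b \<Rightarrow> bool) \<Rightarrow> 'a \<Rightarrow> bool" where
  "in_induced_copy V E W F v \<longleftrightarrow>
     (\<exists>\<phi> S. S \<subseteq> V \<and> v \<in> S \<and> bij_betw \<phi> W S \<and>
            (\<forall>x\<in>W. \<forall>y\<in>W. F x y \<longleftrightarrow> E (\<phi> x) (\<phi> y)))"

definition is_full ::
  "'a set \<Rightarrow> ('a \<Rightarrow> 'a \<Rightarrow> bool) \<Rightarrow> 'b set \<Rightarrow> ('b \<Rightarrow> 'b \<Rightarrow> bool)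
     \<Rightarrow> 'c set \<Rightarrow> ('c \<Rightarrow> 'c \<Rightarrow> bool) \<Rightarrow> bool" where
  "is_full V E W1 F1 W2 F2 \<longleftrightarrow>
     (\<forall>v\<in>V. in_induced_copy V E W1 F1 v \<and> in_induced_copy V E W2 F2 v)"

text \<open>f(H1,H2): minimum order of an (H1,H2)-full graph (graphs on vertices of type nat,
which is no loss of generality for finite graphs).\<close>
definition f_full ::
  "'b set \<Rightarrow> ('b \<Rightarrow> 'b \<Rightarrow> bool) \<Rightarrow> 'c set \<Rightarrow> ('c \<Rightarrow> 'c \<Rightarrow> bool) \<Rightarrow> nat" where
  "f_full W1 F1 W2 F2 = (LEAST k. \<exists>(V::nat set) E.
      simple_graph V E \<and> is_full V E W1 F1 W2 F2 \<and> card V = k)"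

text \<open>Star S_m = K_{1,m-1} on {0..<m}, centre 0.\<close>
definition star_V :: "nat \<Rightarrow> nat set" where "star_V m = {0..<m}"
definition star_E :: "nat \<Rightarrow> nat \<Rightarrow> nat \<Rightarrow> bool" where
  "star_E m x y \<longleftrightarrow> x < m \<and> y < m \<and> x \<noteq> y \<and> (x = 0 \<or> y = 0)"

definition empty_V :: "nat \<Rightarrow> nat set" where "empty_V n = {0..<n}"
definition empty_E :: "nat \<Rightarrow> nat \<Rightarrow> bool" where "empty_E x y \<longleftrightarrow> False"

end

theory Submission
  imports Defs
begin

(*
  Let G be an (S_m, co-K_n)-full graph on N vertices. Take a star of G with centre c and
  leaf set L, and an independent n-set K through c; then L lies outside K, and s = N - n
  vertices lie outside K. Let d be the largest number of neighbours in K of a vertex outside K;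
  d >= 1 because of the leaves.

  If 2m - 2 - d <= s, take an independent n-set J through an outside vertex with d neighbours
  in K. Those neighbours lie in K - J, so t = |K - J| >= d, and every vertex of K \<inter> J has a
  neighbour outside K \<union> J. Hence n - t <= (s - t) d, which with t >= d gives n <= d (s + 1 - d).

  Otherwise d + s < 2(m - 1), and then a star through a vertex y of K either has y as its centre
  (so deg y >= m - 1) or has its centre outside K \<union> L: a centre in L would force m - 1 leaves
  into the d + (s - m + 1) available places. Double counting the edges between K and its
  complement bounds the number of high-degree vertices of K, which gives n <= d' (s + 1 - d')
  for d' = 2(m - 1) - s.

  In both cases some d >= 1 satisfies d - 1 + ceil (n / d) <= s and 2m - 2 - d <= s.
*)

definition indep_set :: "('a \<Rightarrow> 'a \<Rightarrow> bool) \<Rightarrow> 'a set \<Rightarrow> bool" where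
  "indep_set E S \<longleftrightarrow> (\<forall>x\<in>S. \<forall>y\<in>S. \<not> E x y)"

definition neighbours :: "('a \<Rightarrow> 'a \<Rightarrow> bool) \<Rightarrow> 'a \<Rightarrow> 'a set" where
  "neighbours E v = {u. E v u}"

lemma card_UN_neighbours_Int_le:
  assumes "finite A" and "\<And>z. z \<in> A \<Longrightarrow> card (neighbours E z \<inter> K) \<le> d"
  shows "card (\<Union>z\<in>A. neighbours E z \<inter> K) \<le> card A * d"
proof -
  have "card (\<Union>z\<in>A. neighbours E z \<inter> K) \<le> (\<Sum>z\<in>A. card (neighbours E z \<inter> K))"
    using assms(1) by (rule card_UN_le)
  also have "\<dots> \<le> card A * d"
    using assms(2) sum_bounded_above[of A "\<lambda>z. card (neighbours E z \<inter> K)" d] by simp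
  finally show ?thesis .
qed

lemma sum_card_neighbours_indep_set:
  assumes "finite V" and E_in_V: "\<And>x y. E x y \<Longrightarrow> x \<in> V \<and> y \<in> V"
    and E_sym: "\<And>x y. E x y \<Longrightarrow> E y x"
    and "K \<subseteq> V" and K_indep: "indep_set E K"
  shows "(\<Sum>y\<in>K. card (neighbours E y)) = (\<Sum>z\<in>V - K. card (neighbours E z \<inter> K))"
proof -
  have fin: "finite K" "finite (V - K)"
    using assms(1,4) finite_subset by auto
  have "(\<Sum>y\<in>K. card (neighbours E y)) = (\<Sum>y\<in>K. \<Sum>z\<in>V - K. if E y z then 1 else 0)"
  proof (rule sum.cong[OF refl])
    fix y assume "y \<in> K"
    then have "neighbours E y = {z \<in> V - K. E y z}"
      using E_in_V K_indep unfolding neighbours_def indep_set_def by blast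
    then show "card (neighbours E y) = (\<Sum>z\<in>V - K. if E y z then 1 else 0)"
      using sum.inter_filter[OF fin(2), of "\<lambda>_. 1::nat" "E y"] by simp
  qed
  also have "\<dots> = (\<Sum>z\<in>V - K. \<Sum>y\<in>K. if E y z then 1 else 0)"
    by (rule sum.swap)
  also have "\<dots> = (\<Sum>z\<in>V - K. card (neighbours E z \<inter> K))"
  proof (rule sum.cong[OF refl])
    fix z
    have "neighbours E z \<inter> K = {y \<in> K. E y z}"
      using E_sym unfolding neighbours_def by blast
    then show "(\<Sum>y\<in>K. if E y z then 1 else 0) = card (neighbours E z \<inter> K)"
      using sum.inter_filter[OF fin(1), of "\<lambda>_. 1::nat" "\<lambda>y. E y z"] by simp
  qed
  finally show ?thesis .
qed

lemma star_centres_arith: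
  fixes M k d c n :: int
  assumes "1 \<le> M" "0 \<le> k" "0 \<le> d" "d + k < M"
    and covered: "n \<le> c + k * d" and counted: "M * c \<le> (M + k) * d"
  shows "n \<le> (M - k) * (2 * k + 1)"
proof -
  have "M * n \<le> M * c + M * (k * d)"
    using mult_left_mono[OF covered, of M] \<open>1 \<le> M\<close> by (simp add: algebra_simps)
  also have "\<dots> \<le> d * (M + k + M * k)"
    using counted by (simp add: algebra_simps)
  also have "\<dots> \<le> d * (M * (2 * k + 1))"
    using mult_right_mono[of 1 M k] assms(1-3) by (intro mult_left_mono) (auto simp: algebra_simps)
  also have "\<dots> \<le> (M - k) * (M * (2 * k + 1))"
    using assms(1-4) by (intro mult_right_mono) auto
  finally have "M * n \<le> M * ((M - k) * (2 * k + 1))"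
    by (simp add: algebra_simps)
  then show ?thesis
    using \<open>1 \<le> M\<close> by simp
qed

definition admissible_degree :: "nat \<Rightarrow> nat \<Rightarrow> int \<Rightarrow> int \<Rightarrow> bool" where
  "admissible_degree m n s d \<longleftrightarrow> 1 \<le> d \<and> int n \<le> d * (s + 1 - d) \<and> 2 * int m - 2 - d \<le> s"

lemma INF_le_of_admissible_degree:
  assumes "admissible_degree m n s d"
  shows "(INF d\<in>{1::int..}. max (d - 1 + \<lceil>real n / real_of_int d\<rceil>) (2 * int m - 2 - d)) \<le> s"
proof -
  have "1 \<le> d" and "int n \<le> d * (s + 1 - d)" and "2 * int m - 2 - d \<le> s"
    using assms unfolding admissible_degree_def by auto
  define F where "F d = max (d - 1 + \<lceil>real n / real_of_int d\<rceil>) (2 * int m - 2 - d)" for d :: int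
  have bdd: "bdd_below (F ` {1..})"
  proof (rule bdd_belowI2)
    fix x :: int assume "x \<in> {1..}"
    moreover have "0 \<le> real n / real_of_int x"
      using \<open>x \<in> {1..}\<close> by simp
    then have "0 \<le> \<lceil>real n / real_of_int x\<rceil>"
      by simp
    ultimately show "0 \<le> F x"
      unfolding F_def by (simp add: max.coboundedI1)
  qed
  have "real n \<le> real_of_int (d * (s + 1 - d))"
    using \<open>int n \<le> d * (s + 1 - d)\<close> by (metis of_int_le_iff of_int_of_nat_eq)
  then have "real n / real_of_int d \<le> real_of_int (s + 1 - d)"
    using \<open>1 \<le> d\<close> by (simp add: pos_divide_le_eq mult.commute)
  then have "\<lceil>real n / real_of_int d\<rceil> \<le> s + 1 - d"
    by (simp only: ceiling_le_iff)
  then have "F d \<le> s"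
    using \<open>2 * int m - 2 - d \<le> s\<close> unfolding F_def by simp
  then show ?thesis
    unfolding F_def[symmetric] using bdd \<open>1 \<le> d\<close> by (meson atLeast_iff cInf_lower image_eqI order_trans)
qed

lemma in_induced_copy_empty_VD:
  assumes "in_induced_copy V E (empty_V n) empty_E v"
  shows "\<exists>S\<subseteq>V. v \<in> S \<and> card S = n \<and> indep_set E S"
proof -
  from assms obtain \<phi> S where S: "S \<subseteq> V" "v \<in> S" and bij: "bij_betw \<phi> {0..<n} S"
    and no_edge: "\<forall>x\<in>{0..<n}. \<forall>y\<in>{0..<n}. \<not> E (\<phi> x) (\<phi> y)"
    unfolding in_induced_copy_def empty_V_def empty_E_def by auto
  have "card S = n"
    using bij_betw_same_card[OF bij] by simp
  moreover have "indep_set E S"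
    using no_edge bij_betw_imp_surj_on[OF bij] unfolding indep_set_def by blast
  ultimately show ?thesis
    using S by blast
qed

lemma in_induced_copy_star_VD:
  assumes "in_induced_copy V E (star_V m) (star_E m) v"
  shows "\<exists>c L. c \<in> V \<and> L \<subseteq> V \<and> card L = m - 1 \<and> (\<forall>l\<in>L. E c l) \<and> indep_set E L
           \<and> (v = c \<or> v \<in> L)"
proof -
  from assms obtain \<phi> S where S: "S \<subseteq> V" "v \<in> S" and bij: "bij_betw \<phi> {0..<m} S"
    and edges: "\<forall>x\<in>{0..<m}. \<forall>y\<in>{0..<m}. star_E m x y \<longleftrightarrow> E (\<phi> x) (\<phi> y)"
    unfolding in_induced_copy_def star_V_def by auto
  have inj: "inj_on \<phi> {0..<m}" and img: "\<phi> ` {0..<m} = S"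
    using bij by (auto simp: bij_betw_def)
  have m_pos: "0 < m"
    using S(2) img by auto
  define L where "L = \<phi> ` {1..<m}"
  have "card L = m - 1"
    unfolding L_def by (subst card_image) (auto intro: inj_on_subset[OF inj])
  moreover have "\<forall>l\<in>L. E (\<phi> 0) l"
    using edges m_pos unfolding L_def star_E_def by force
  moreover have "indep_set E L"
    unfolding indep_set_def
  proof (intro ballI)
    fix x y assume "x \<in> L" "y \<in> L"
    then obtain i j where "i \<in> {1..<m}" "j \<in> {1..<m}" "x = \<phi> i" "y = \<phi> j"
      unfolding L_def by blast
    moreover have "\<not> star_E m i j"
      using \<open>i \<in> {1..<m}\<close> \<open>j \<in> {1..<m}\<close> by (simp add: star_E_def)
    ultimately show "\<not> E x y"
      using edges by auto
  qed
  moreover have "\<phi> 0 \<in> V" "L \<subseteq> V"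
    using S img m_pos unfolding L_def by auto
  moreover have "v = \<phi> 0 \<or> v \<in> L"
  proof -
    obtain i where "i < m" "v = \<phi> i"
      using S(2) img by auto
    then show ?thesis
      unfolding L_def by (cases "i = 0") (auto intro: bexI[of _ i])
  qed
  ultimately show ?thesis
    by blast
qed

locale star_indep_full =
  fixes V :: "'a set" and E :: "'a \<Rightarrow> 'a \<Rightarrow> bool" and m n :: nat
  assumes finite_V: "finite V" and V_nonempty: "V \<noteq> {}"
    and E_in_V: "\<And>x y. E x y \<Longrightarrow> x \<in> V \<and> y \<in> V"
    and E_sym: "\<And>x y. E x y \<Longrightarrow> E y x"
    and two_le_m: "2 \<le> m"
    and indep_set_through: "\<And>v. v \<in> V \<Longrightarrow> \<exists>S\<subseteq>V. v \<in> S \<and> card S = n \<and> indep_set E S"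
    and star_through: "\<And>v. v \<in> V \<Longrightarrow> \<exists>c L. c \<in> V \<and> L \<subseteq> V \<and> card L = m - 1
          \<and> (\<forall>l\<in>L. E c l) \<and> indep_set E L \<and> (v = c \<or> v \<in> L)"

lemma full_graph_star_indep_full:
  assumes "simple_graph V E" and "is_full V E (star_V m) (star_E m) (empty_V n) empty_E"
    and "2 \<le> m"
  shows "star_indep_full V E m n"
proof
  show "finite V" "V \<noteq> {}" "\<And>x y. E x y \<Longrightarrow> x \<in> V \<and> y \<in> V" "\<And>x y. E x y \<Longrightarrow> E y x"
    using assms(1) unfolding simple_graph_def by auto
  show "2 \<le> m"
    by (fact assms(3))
  fix v assume "v \<in> V"
  then have indep_copy: "in_induced_copy V E (empty_V n) empty_E v"
    and star_copy: "in_induced_copy V E (star_V m) (star_E m) v"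
    using assms(2) unfolding is_full_def by auto
  show "\<exists>S\<subseteq>V. v \<in> S \<and> card S = n \<and> indep_set E S"
    using indep_copy by (rule in_induced_copy_empty_VD)
  show "\<exists>c L. c \<in> V \<and> L \<subseteq> V \<and> card L = m - 1 \<and> (\<forall>l\<in>L. E c l) \<and> indep_set E L
          \<and> (v = c \<or> v \<in> L)"
    using star_copy by (rule in_induced_copy_star_VD)
qed

context star_indep_full
begin

lemma finite_neighbours: "finite (neighbours E v)"
  using finite_subset[of "neighbours E v" V] E_in_V finite_V unfolding neighbours_def by auto

lemma neighbour_exists:
  assumes "v \<in> V"
  shows "\<exists>u. E v u"
proof -
  obtain c L where "card L = m - 1" "\<forall>l\<in>L. E c l" "v = c \<or> v \<in> L"
    using star_through[OF assms] by blast
  moreover have "L \<noteq> {}"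
    using \<open>card L = m - 1\<close> two_le_m by auto
  ultimately show ?thesis
    using E_sym by blast
qed

lemma card_indep_sets_Int_le:
  assumes K: "K \<subseteq> V" "indep_set E K" and J: "J \<subseteq> V" "indep_set E J"
    and deg_le: "\<And>z. z \<in> V - K \<Longrightarrow> card (neighbours E z \<inter> K) \<le> d"
  shows "card (K \<inter> J) \<le> card ((V - K) - J) * d"
proof -
  have "K \<inter> J \<subseteq> (\<Union>z\<in>(V - K) - J. neighbours E z \<inter> K)"
  proof
    fix y assume y: "y \<in> K \<inter> J"
    then obtain z where "E y z"
      using neighbour_exists K(1) by blast
    then have "z \<in> (V - K) - J" "y \<in> neighbours E z \<inter> K"
      using y E_in_V E_sym K(2) J(2) unfolding indep_set_def neighbours_def by blast+
    then show "y \<in> (\<Union>z\<in>(V - K) - J. neighbours E z \<inter> K)"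
      by blast
  qed
  then have "card (K \<inter> J) \<le> card (\<Union>z\<in>(V - K) - J. neighbours E z \<inter> K)"
    using finite_subset[OF K(1) finite_V] by (intro card_mono) (auto intro: finite_subset[of _ K])
  also have "\<dots> \<le> card ((V - K) - J) * d"
    using deg_le finite_V by (intro card_UN_neighbours_Int_le) auto
  finally show ?thesis .
qed

lemma second_indep_set_bound:
  assumes K: "K \<subseteq> V" "card K = n" "indep_set E K"
    and deg_le: "\<And>z. z \<in> V - K \<Longrightarrow> card (neighbours E z \<inter> K) \<le> d"
    and v: "v \<in> V - K" "d \<le> card (neighbours E v \<inter> K)"
    and "1 \<le> d"
  shows "int n \<le> int d * (int (card V) - int n + 1 - int d)"
proof -
  obtain J where J: "J \<subseteq> V" "v \<in> J" "card J = n" "indep_set E J"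
    using indep_set_through v(1) by blast
  have fin: "finite K" "finite J"
    using finite_subset finite_V K(1) J(1) by auto
  define t where "t = card (K - J)"
  have "neighbours E v \<inter> K \<subseteq> K - J"
    using J(2,4) unfolding indep_set_def neighbours_def by blast
  then have "d \<le> t"
    using v(2) card_mono[of "K - J"] fin unfolding t_def by (meson finite_Diff le_trans)
  have n_eq: "card K = card (K \<inter> J) + t"
    unfolding t_def using card_Int_Diff[OF fin(1)] .
  have "card (V - K) = t + card ((V - K) - J)"
  proof -
    have "card J = card (K \<inter> J) + card (J - K)"
      using card_Int_Diff[OF fin(2), of K] by (simp add: Int_commute)
    moreover have "(V - K) \<inter> J = J - K"
      using J(1) by blast
    ultimately show ?thesis
      using card_Int_Diff[of "V - K" J] finite_V J(3) n_eq K(2) by simp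
  qed
  moreover have "card (V - K) = card V - n" "n \<le> card V"
    using card_Diff_subset[OF fin(1) K(1)] card_mono[OF finite_V K(1)] K(2) by simp_all
  ultimately have s_eq: "int (card V) - int n = int t + int (card ((V - K) - J))"
    by linarith
  have "0 \<le> (int t - int d) * (int d - 1)"
    using \<open>d \<le> t\<close> \<open>1 \<le> d\<close> by simp
  moreover have "int (card (K \<inter> J)) \<le> int (card ((V - K) - J)) * int d"
    using card_indep_sets_Int_le[OF K(1,3) J(1,4) deg_le] by (metis of_nat_le_iff of_nat_mult)
  ultimately show ?thesis
    unfolding s_eq using n_eq K(2) by (simp add: algebra_simps)
qed

lemma card_neighbours_less_if_in_leaves:
  assumes K: "K \<subseteq> V"
    and L: "L \<subseteq> V - K" "card L = m - 1" "indep_set E L"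
    and deg_le: "\<And>z. z \<in> V - K \<Longrightarrow> card (neighbours E z \<inter> K) \<le> d"
    and small: "d + card (V - K) < 2 * (m - 1)"
    and "c \<in> L"
  shows "card (neighbours E c) < m - 1"
proof -
  have "card (neighbours E c \<inter> K) \<le> d"
    using deg_le L(1) \<open>c \<in> L\<close> by blast
  moreover have "neighbours E c - K \<subseteq> (V - K) - L"
    using L(3) \<open>c \<in> L\<close> E_in_V unfolding indep_set_def neighbours_def by blast
  then have "card (neighbours E c - K) \<le> card (V - K) - (m - 1)"
    using card_mono[of "(V - K) - L" "neighbours E c - K"] card_Diff_subset[of L "V - K"] L(1,2) finite_V
    by (simp add: finite_subset)
  moreover have "card (neighbours E c) = card (neighbours E c \<inter> K) + card (neighbours E c - K)"
    using card_Int_Diff[OF finite_neighbours] .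
  moreover have "card L \<le> card (V - K)"
    using card_mono[OF _ L(1)] finite_V by simp
  ultimately show ?thesis
    using small L(2) by linarith
qed

lemma indep_set_covered_by_centres_and_outer_neighbours:
  assumes K: "K \<subseteq> V" "indep_set E K"
    and L: "L \<subseteq> V - K" "card L = m - 1" "indep_set E L"
    and deg_le: "\<And>z. z \<in> V - K \<Longrightarrow> card (neighbours E z \<inter> K) \<le> d"
    and small: "d + card (V - K) < 2 * (m - 1)"
  shows "K \<subseteq> {y \<in> K. m - 1 \<le> card (neighbours E y)} \<union> (\<Union>z\<in>(V - K) - L. neighbours E z \<inter> K)"
proof
  fix y assume "y \<in> K"
  then have "y \<in> V"
    using K(1) by blast
  then obtain c Ly where star: "Ly \<subseteq> V" "card Ly = m - 1" "\<forall>l\<in>Ly. E c l" "y = c \<or> y \<in> Ly"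
    using star_through[OF \<open>y \<in> V\<close>] by blast
  have "Ly \<subseteq> neighbours E c"
    using star(3) unfolding neighbours_def by blast
  then have c_deg: "m - 1 \<le> card (neighbours E c)"
    using card_mono[OF finite_neighbours] star(2) by metis
  show "y \<in> {y \<in> K. m - 1 \<le> card (neighbours E y)} \<union> (\<Union>z\<in>(V - K) - L. neighbours E z \<inter> K)"
  proof (cases "y = c")
    case True
    then show ?thesis
      using c_deg \<open>y \<in> K\<close> by blast
  next
    case False
    then have "E c y"
      using star(3,4) by blast
    then have "c \<in> V - K"
      using E_in_V K(2) \<open>y \<in> K\<close> unfolding indep_set_def by blast
    moreover have "c \<notin> L"
      using card_neighbours_less_if_in_leaves[OF K(1) L deg_le small] c_deg by fastforce
    ultimately show ?thesis
      using \<open>E c y\<close> \<open>y \<in> K\<close> unfolding neighbours_def by blast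
  qed
qed

lemma card_high_degree_le:
  assumes K: "K \<subseteq> V" "indep_set E K"
    and deg_le: "\<And>z. z \<in> V - K \<Longrightarrow> card (neighbours E z \<inter> K) \<le> d"
  shows "card {y \<in> K. r \<le> card (neighbours E y)} * r \<le> card (V - K) * d"
proof -
  let ?C = "{y \<in> K. r \<le> card (neighbours E y)}"
  have "card ?C * r \<le> (\<Sum>y\<in>?C. card (neighbours E y))"
    using sum_bounded_below[of ?C r "\<lambda>y. card (neighbours E y)"] by simp
  also have "\<dots> \<le> (\<Sum>y\<in>K. card (neighbours E y))"
    using finite_subset[OF K(1) finite_V] by (intro sum_mono2) auto
  also have "\<dots> = (\<Sum>z\<in>V - K. card (neighbours E z \<inter> K))"
    using finite_V E_in_V E_sym K by (rule sum_card_neighbours_indep_set)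
  also have "\<dots> \<le> card (V - K) * d"
    using sum_bounded_above[of "V - K" "\<lambda>z. card (neighbours E z \<inter> K)" d] deg_le by simp
  finally show ?thesis .
qed

lemma star_centres_bound:
  assumes K: "K \<subseteq> V" "card K = n" "indep_set E K"
    and L: "L \<subseteq> V - K" "card L = m - 1" "indep_set E L"
    and deg_le: "\<And>z. z \<in> V - K \<Longrightarrow> card (neighbours E z \<inter> K) \<le> d"
    and small: "d + card (V - K) < 2 * (m - 1)"
  shows "int n \<le> (2 * (int m - 1) - int (card (V - K))) * (2 * (int (card (V - K)) - (int m - 1)) + 1)"
proof -
  define C where "C = {y \<in> K. m - 1 \<le> card (neighbours E y)}"
  define U where "U = (\<Union>z\<in>(V - K) - L. neighbours E z \<inter> K)"
  have fin: "finite K" "finite (V - K)"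
    using finite_subset[OF K(1) finite_V] finite_V by auto
  have cover: "K \<subseteq> C \<union> U"
    unfolding C_def U_def using K(1,3) L deg_le small
    by (rule indep_set_covered_by_centres_and_outer_neighbours)
  have fin_cover: "finite (C \<union> U)"
    using fin(1) by (rule finite_subset[rotated]) (auto simp: C_def U_def)
  have "n \<le> card (C \<union> U)"
    using card_mono[OF fin_cover cover] K(2) by simp
  also have "\<dots> \<le> card C + card U"
    by (rule card_Un_le)
  also have "\<dots> \<le> card C + card ((V - K) - L) * d"
    unfolding U_def using fin(2) deg_le by (intro add_left_mono card_UN_neighbours_Int_le) auto
  finally have covered: "n \<le> card C + card ((V - K) - L) * d" .
  have counted: "card C * (m - 1) \<le> card (V - K) * d"
    unfolding C_def using K(1,3) deg_le by (rule card_high_degree_le)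
  define M k where "M = int m - 1" and "k = int (card (V - K)) - M"
  have "m - 1 \<le> card (V - K)"
    using card_mono[OF fin(2) L(1)] L(2) by simp
  then have M_eq: "int (m - 1) = M" and k_eq: "int (card ((V - K) - L)) = k"
    using two_le_m card_Diff_subset[OF finite_subset[OF L(1) fin(2)] L(1)] L(2)
    unfolding M_def k_def by simp_all
  have "int n \<le> int (card C) + k * int d"
    using covered unfolding k_eq[symmetric] by (metis of_nat_add of_nat_le_iff of_nat_mult)
  moreover have "M * int (card C) \<le> (M + k) * int d"
    using counted unfolding M_eq[symmetric] k_def by (simp add: mult.commute flip: of_nat_mult)
  ultimately have "int n \<le> (M - k) * (2 * k + 1)"
    using small two_le_m \<open>m - 1 \<le> card (V - K)\<close>
    by (intro star_centres_arith) (auto simp: M_def k_def)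
  then show ?thesis
    unfolding M_def k_def by (simp add: algebra_simps)
qed

lemma admissible_degree_of_max_outer_degree:
  assumes K: "K \<subseteq> V" "card K = n" "indep_set E K"
    and L: "L \<subseteq> V - K" "card L = m - 1" "indep_set E L"
    and deg_le: "\<And>z. z \<in> V - K \<Longrightarrow> card (neighbours E z \<inter> K) \<le> d"
    and v: "v \<in> V - K" "card (neighbours E v \<inter> K) = d"
    and "1 \<le> d"
  shows "\<exists>d'. admissible_degree m n (int (card V) - int n) d'"
proof -
  define s where "s = int (card V) - int n"
  have card_outer: "int (card (V - K)) = s"
    using card_Diff_subset[OF finite_subset[OF K(1) finite_V] K(1)] card_mono[OF finite_V K(1)] K(2)
    unfolding s_def by simp
  show ?thesis
  proof (cases "2 * int m - 2 - int d \<le> s")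
    case True
    have "int n \<le> int d * (s + 1 - int d)"
      unfolding s_def using v(2) \<open>1 \<le> d\<close> by (intro second_indep_set_bound[OF K deg_le v(1)]) simp_all
    then have "admissible_degree m n s (int d)"
      using True \<open>1 \<le> d\<close> unfolding admissible_degree_def by simp
    then show ?thesis
      unfolding s_def by blast
  next
    case False
    define d' where "d' = 2 * (int m - 1) - s"
    have "d + card (V - K) < 2 * (m - 1)"
      using False card_outer two_le_m by linarith
    then have "int n \<le> (2 * (int m - 1) - s) * (2 * (s - (int m - 1)) + 1)"
      using star_centres_bound[OF K L deg_le] card_outer by simp
    also have "\<dots> = d' * (s + 1 - d')"
      unfolding d'_def by (simp add: algebra_simps)
    finally have "admissible_degree m n s d'"
      using False \<open>1 \<le> d\<close> unfolding admissible_degree_def d'_def by simp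
    then show ?thesis
      unfolding s_def by blast
  qed
qed

lemma admissible_degree_exists: "\<exists>d. admissible_degree m n (int (card V) - int n) d"
proof -
  obtain v0 where "v0 \<in> V"
    using V_nonempty by blast
  obtain c L where c: "c \<in> V" and L: "L \<subseteq> V" "card L = m - 1" "indep_set E L"
    and c_L: "\<forall>l\<in>L. E c l"
    using star_through[OF \<open>v0 \<in> V\<close>] by blast
  obtain K where K: "K \<subseteq> V" "c \<in> K" "card K = n" "indep_set E K"
    using indep_set_through[OF c] by blast
  have L_outer: "L \<subseteq> V - K"
    using L(1) K(2,4) c_L unfolding indep_set_def by blast
  obtain l where "l \<in> L"
    using L(2) two_le_m by fastforce
  define deg where "deg z = card (neighbours E z \<inter> K)" for z
  define d where "d = Max (deg ` (V - K))"
  have deg_le: "deg z \<le> d" if "z \<in> V - K" for z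
    unfolding d_def using finite_V that by simp
  have "d \<in> deg ` (V - K)"
    unfolding d_def using finite_V L_outer \<open>l \<in> L\<close> by (intro Max_in) auto
  then obtain v where v: "v \<in> V - K" "deg v = d"
    by auto
  have "c \<in> neighbours E l \<inter> K"
    using c_L \<open>l \<in> L\<close> K(2) E_sym unfolding neighbours_def by blast
  then have "0 < deg l"
    unfolding deg_def using finite_neighbours[of l] by (auto simp: card_gt_0_iff)
  then have "1 \<le> d"
    using deg_le[of l] \<open>l \<in> L\<close> L_outer by fastforce
  then show ?thesis
    using v(2) unfolding deg_def
    by (intro admissible_degree_of_max_outer_degree[OF K(1,3,4) L_outer L(2,3)
          deg_le[unfolded deg_def] v(1)])
qed

end

lemma complete_bipartite_is_full:
  assumes "0 < m" "m \<le> n + 1" "0 < n"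
  shows "\<exists>(V::nat set) E. simple_graph V E \<and> is_full V E (star_V m) (star_E m) (empty_V n) empty_E
           \<and> card V = 2 * n"
proof -
  \<comment> \<open>K_{n,n}, with the even and the odd numbers below 2n as its two sides\<close>
  define V :: "nat set" where "V = {0..<2*n}"
  define E where "E x y \<longleftrightarrow> x < 2*n \<and> y < 2*n \<and> odd (x + y)" for x y :: nat
  have "simple_graph V E"
    unfolding simple_graph_def V_def E_def using assms by auto
  moreover have "is_full V E (star_V m) (star_E m) (empty_V n) empty_E"
    unfolding is_full_def
  proof (intro ballI conjI)
    fix v assume "v \<in> V"
    then have v_lt: "v < 2 * n"
      unfolding V_def by simp
    define \<phi> where "\<phi> j = (if j = 0 then v else 2 * (j - 1) + (1 - v mod 2))" for j :: nat
    have edge_iff: "odd (\<phi> i + \<phi> j) \<longleftrightarrow> i \<noteq> j \<and> (i = 0 \<or> j = 0)" for i j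
      unfolding \<phi>_def by (cases "i = 0"; cases "j = 0"; cases "even v") auto
    have "inj_on \<phi> {0..<m}"
      by (rule inj_onI) (metis edge_iff \<phi>_def add_right_cancel mult_left_cancel zero_neq_numeral
          diff_Suc_1 not0_implies_Suc)
    moreover have \<phi>_lt: "\<phi> j < 2 * n" if "j < m" for j
      using that v_lt assms unfolding \<phi>_def by (cases "j = 0") auto
    ultimately show "in_induced_copy V E (star_V m) (star_E m) v"
      unfolding in_induced_copy_def
      using assms edge_iff v_lt
      by (intro exI[of _ \<phi>] exI[of _ "\<phi> ` star_V m"])
         (auto simp: star_V_def V_def bij_betw_def star_E_def E_def image_iff \<phi>_def intro: bexI[of _ 0])
    define \<psi> where "\<psi> j = 2 * j + v mod 2" for j :: nat
    have "v \<in> \<psi> ` empty_V n"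
      using v_lt unfolding \<psi>_def empty_V_def by (intro image_eqI[of _ _ "v div 2"]) auto
    then show "in_induced_copy V E (empty_V n) empty_E v"
      unfolding in_induced_copy_def
      by (intro exI[of _ \<psi>] exI[of _ "\<psi> ` empty_V n"])
         (auto simp: empty_V_def V_def bij_betw_def inj_on_def \<psi>_def empty_E_def E_def)
  qed
  moreover have "card V = 2 * n"
    unfolding V_def by simp
  ultimately show ?thesis
    by blast
qed

lemma f_full_attained:
  assumes "\<exists>(V::nat set) E. simple_graph V E \<and> is_full V E W1 F1 W2 F2 \<and> card V = k"
  shows "\<exists>(V::nat set) E. simple_graph V E \<and> is_full V E W1 F1 W2 F2
           \<and> card V = f_full W1 F1 W2 F2"
  unfolding f_full_def using LeastI_ex[of "\<lambda>k. \<exists>(V::nat set) E. simple_graph V E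
    \<and> is_full V E W1 F1 W2 F2 \<and> card V = k"] assms by blast

theorem lemma4p3:
  fixes n m :: nat
  assumes "2 \<le> m" and "m \<le> n"
  shows "int (f_full (star_V m) (star_E m) (empty_V n) empty_E)
           \<ge> int n + (INF d\<in>{1::int..}.
                max (d - 1 + \<lceil>real n / real_of_int d\<rceil>) (2 * int m - 2 - d))"
proof -
  have "\<exists>(V::nat set) E. simple_graph V E \<and> is_full V E (star_V m) (star_E m) (empty_V n) empty_E
          \<and> card V = 2 * n"
    using assms by (intro complete_bipartite_is_full) auto
  then obtain V :: "nat set" and E where G: "simple_graph V E"
      "is_full V E (star_V m) (star_E m) (empty_V n) empty_E"
    and card_V: "card V = f_full (star_V m) (star_E m) (empty_V n) empty_E"
    using f_full_attained by blast
  interpret star_indep_full V E m n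
    using full_graph_star_indep_full[OF G assms(1)] .
  obtain d where "admissible_degree m n (int (card V) - int n) d"
    using admissible_degree_exists by blast
  then have "(INF d\<in>{1::int..}. max (d - 1 + \<lceil>real n / real_of_int d\<rceil>) (2 * int m - 2 - d))
               \<le> int (card V) - int n"
    by (rule INF_le_of_admissible_degree)
  then show ?thesis
    unfolding card_V by simp
qed

end
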